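(* Let $h>0$ satisfy $L_eh^2\le1/9$, where $L_e=L+2\epsilon\tilde L$. Then for all $x,v\in\mathbb{R}^{Nd}$, $$\sum_{\ell=1}^N\sup_{0\le s\le h}|q^\ell_s(x,v)-x^\ell-sv^\ell|^2\le\frac{16}5(L_eh^2)^2\sum_{\ell=1}^N\Big(|x^\ell|^2+h^2|v^\ell|^2+\frac13L_e^{-2}\epsilon^2\mathbf W_0^2\Big),$$ where $\mathbf W_0=|\nabla_1W(0,0)|$.
   Context: Standing assumptions: $\epsilon\ge0$; $V:\mathbb{R}^d\to\mathbb{R}$, $W:\mathbb{R}^d\times\mathbb{R}^d\to\mathbb{R}$ are $C^1$, $\nabla_1W$ the gradient in the first argument, constants $L>0$, $\tilde L\ge0$ with: (a) $V(0)=0$, $V\ge0$; (b) $|\nabla V(x)-\nabla V(y)|\le L|x-y|$; (d) $W$ symmetric, $|\nabla_1W(x,y)-\nabla_1W(\tilde x,\tilde y)|\le\tilde L(|x-\tilde x|+|y-\tilde y|)$. Points of $\mathbb{R}^{Nd}$: $x=(x^1,\dots,x^N)$, $x^i\in\mathbb{R}^d$. $U(x)=\sum_i\big(V(x^i)+\frac\epsilon{2N}\sum_jW(x^i,x^j)\big)$, $\nabla_iU=\partial U/\partial x^i$. Exact flow $(q_t,p_t)(x,v)$: $\dot q^i_t=p^i_t$, $\dot p^i_t=-\nabla_iU(q_t)$, $(q_0,p_0)=(x,v)$. *)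

theory Defs
  imports "HOL-Analysis.Analysis"
begin

text \<open>Configurations in R^{Nd} are represented as functions nat => 'a, where
  'a is R^d (any Euclidean space) and only the components 0..N-1 matter.\<close>

definition potU :: "nat \<Rightarrow> real \<Rightarrow> ('a \<Rightarrow> real) \<Rightarrow> ('a \<Rightarrow> 'a \<Rightarrow> real)
                    \<Rightarrow> (nat \<Rightarrow> 'a) \<Rightarrow> real" where
  "potU N \<epsilon> V W x = (\<Sum>i<N. V (x i) + \<epsilon> / (2 * real N) * (\<Sum>j<N. W (x i) (x j)))"

end

theory Submission
  imports Defs
begin

(* Write a_l = sup_{0<=s<=h} |q^l_s - x^l - s v^l| and b_l = |x^l| + h |v^l|, so that
   |q^l_s| <= a_l + b_l on [0,h]. Since grad V(0) = 0 and both gradients are Lipschitz, the force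
   on particle l is then at most F_l = (L + eps Lt)(a_l + b_l) + eps Lt mean_j (a_j + b_j) + eps W0,
   and the second-order Taylor remainder gives a_l <= h^2 F_l / 2. Taking l^2 norms over the
   particles (Cauchy-Schwarz controls the mean) yields the self-consistent inequality
   |a| <= (L_e h^2 / 2)(|a| + |b|) + (h^2 / 2) sqrt N eps W0, which can be solved for |a|
   because L_e h^2 <= 1/9. *)

lemma gradient_eq_0_at_global_min:
  fixes f :: "'a::real_inner \<Rightarrow> real"
  assumes "(f has_derivative (\<lambda>k. g \<bullet> k)) (at x)" and "\<And>y. f x \<le> f y"
  shows "g = 0"
proof -
  have "(\<lambda>k. g \<bullet> k) = (\<lambda>k. 0)"
    using has_derivative_local_min[OF assms(1)] assms(2) by simp
  then have "g \<bullet> g = 0" by metis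
  then show ?thesis by simp
qed

lemma gradient_unique:
  fixes f :: "'a::real_inner \<Rightarrow> real"
  assumes "(f has_derivative (\<lambda>k. a \<bullet> k)) (at x)" and "(f has_derivative (\<lambda>k. b \<bullet> k)) (at x)"
  shows "a = b"
  using has_derivative_unique[OF assms] by (metis vector_eq_rdot)

lemma has_derivative_fun_upd_component:
  "((\<lambda>u. (y(i := u)) k) has_derivative (\<lambda>h. if k = i then h else 0)) (at u0)"
  by (cases "k = i") (auto intro!: derivative_eq_intros)

lemma norm_second_order_remainder_le:
  fixes q p F :: "real \<Rightarrow> 'a::real_normed_vector"
  assumes q': "\<And>t. 0 \<le> t \<Longrightarrow> t \<le> s \<Longrightarrow> (q has_vector_derivative p t) (at t)"
    and p': "\<And>t. 0 \<le> t \<Longrightarrow> t \<le> s \<Longrightarrow> (p has_vector_derivative F t) (at t)"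
    and F: "\<And>t. 0 \<le> t \<Longrightarrow> t \<le> s \<Longrightarrow> norm (F t) \<le> B"
    and s: "0 \<le> s"
  shows "norm (q s - q 0 - s *\<^sub>R p 0) \<le> B * s\<^sup>2 / 2"
proof (cases "s = 0")
  case False
  have "isCont p t" "isCont q t" if "0 \<le> t" "t \<le> s" for t
    using q' p' that has_vector_derivative_continuous by blast+
  then have p_cont: "continuous_on {0..t} p" and q_cont: "continuous_on {0..t} q" if "t \<le> s" for t
    using that by (auto intro!: continuous_at_imp_continuous_on)
  have p_increment: "norm (p t - p 0) \<le> B * t" if "0 \<le> t" "t \<le> s" for t
  proof (cases "t = 0")
    case False
    have "norm (p t - p 0) \<le> B * t - B * 0"
      by (rule differentiable_bound_general[where f' = F and \<phi>' = "\<lambda>_. B"])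
        (use that False p_cont p' F in \<open>auto intro!: continuous_on_mult_left derivative_eq_intros\<close>)
    then show ?thesis by simp
  qed simp
  have "norm ((q s - s *\<^sub>R p 0) - (q 0 - 0 *\<^sub>R p 0)) \<le> B * s\<^sup>2 / 2 - B * 0\<^sup>2 / 2"
    by (rule differentiable_bound_general[where f' = "\<lambda>t. p t - p 0" and \<phi>' = "\<lambda>t. B * t"])
      (use s False q_cont q' p_increment in \<open>auto intro!: continuous_on_diff continuous_on_scaleR
          continuous_on_mult_left continuous_on_divide continuous_on_power derivative_eq_intros
          simp flip: has_real_derivative_iff_has_vector_derivative\<close>)
  then show ?thesis by (simp add: algebra_simps)
qed simp

lemma norm_le_sqrt_SUP_square_norm:
  fixes f :: "real \<Rightarrow> 'a::real_normed_vector"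
  assumes "continuous_on {a..b} f" and "s \<in> {a..b}"
  shows "norm (f s) \<le> sqrt (SUP t\<in>{a..b}. (norm (f t))\<^sup>2)"
proof -
  have "compact ((\<lambda>t. (norm (f t))\<^sup>2) ` {a..b})"
    using assms(1) by (intro compact_continuous_image continuous_intros) auto
  then have "bdd_above ((\<lambda>t. (norm (f t))\<^sup>2) ` {a..b})"
    by (intro bounded_imp_bdd_above compact_imp_bounded)
  then have "(norm (f s))\<^sup>2 \<le> (SUP t\<in>{a..b}. (norm (f t))\<^sup>2)"
    using assms(2) by (rule cSUP_upper2) simp
  then show ?thesis by (rule real_le_rsqrt)
qed

lemma sqrt_SUP_square_norm_le:
  fixes f :: "real \<Rightarrow> 'a::real_normed_vector"
  assumes "a \<le> b" and "\<And>t. t \<in> {a..b} \<Longrightarrow> norm (f t) \<le> M"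
  shows "sqrt (SUP t\<in>{a..b}. (norm (f t))\<^sup>2) \<le> M"
proof -
  have "M \<ge> 0" using order_trans[OF norm_ge_zero assms(2)[of a]] assms(1) by simp
  have "(SUP t\<in>{a..b}. (norm (f t))\<^sup>2) \<le> M\<^sup>2"
    using assms by (intro cSUP_least power_mono) auto
  with \<open>M \<ge> 0\<close> show ?thesis by (rule real_le_lsqrt)
qed

lemma sqrt_SUP_second_order_remainder_le:
  fixes q p F :: "real \<Rightarrow> 'a::real_normed_vector"
  assumes q': "\<And>t. 0 \<le> t \<Longrightarrow> t \<le> h \<Longrightarrow> (q has_vector_derivative p t) (at t)"
    and p': "\<And>t. 0 \<le> t \<Longrightarrow> t \<le> h \<Longrightarrow> (p has_vector_derivative F t) (at t)"
    and F: "\<And>t. 0 \<le> t \<Longrightarrow> t \<le> h \<Longrightarrow> norm (F t) \<le> B"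
    and h: "0 \<le> h"
  shows "sqrt (SUP s\<in>{0..h}. (norm (q s - q 0 - s *\<^sub>R p 0))\<^sup>2) \<le> B * h\<^sup>2 / 2"
proof (rule sqrt_SUP_square_norm_le[OF h])
  fix s assume s: "s \<in> {0..h}"
  have "B \<ge> 0" using order_trans[OF norm_ge_zero F[of 0]] h by simp
  have "norm (q s - q 0 - s *\<^sub>R p 0) \<le> B * s\<^sup>2 / 2"
    using s by (intro norm_second_order_remainder_le[where F = F] q' p' F) auto
  also have "\<dots> \<le> B * h\<^sup>2 / 2"
    using s \<open>B \<ge> 0\<close> by (intro divide_right_mono mult_left_mono power_mono) auto
  finally show "norm (q s - q 0 - s *\<^sub>R p 0) \<le> B * h\<^sup>2 / 2" .
qed

lemma sqrt_card_mult_abs_mean_le_L2_set: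
  "sqrt (real (card A)) * \<bar>sum f A / real (card A)\<bar> \<le> L2_set f A"
proof (cases "finite A \<and> A \<noteq> {}")
  case True
  have "(sqrt (real (card A)) * \<bar>sum f A / real (card A)\<bar>)\<^sup>2 = (sum f A)\<^sup>2 / real (card A)"
    using True by (simp add: power_mult_distrib power_divide) (simp add: power2_eq_square)
  also have "\<dots> \<le> (\<Sum>i\<in>A. (f i)\<^sup>2)"
    using sum_squared_le_sum_of_squares[of f A] True by (simp add: divide_le_eq card_gt_0_iff)
  finally show ?thesis unfolding L2_set_def by (rule real_le_rsqrt)
qed auto

lemma L2_set_mean_field_le:
  fixes c :: "nat \<Rightarrow> real"
  assumes "0 \<le> A" and "0 \<le> C"
  shows "L2_set (\<lambda>l. A * c l + C * ((\<Sum>j<N. c j) / real N) + D) {..<N}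
           \<le> (A + C) * L2_set c {..<N} + sqrt (real N) * \<bar>D\<bar>"
proof -
  define m where "m = (\<Sum>j<N. c j) / real N"
  have "L2_set (\<lambda>l. A * c l + (C * m + D)) {..<N}
      \<le> L2_set (\<lambda>l. A * c l) {..<N} + L2_set (\<lambda>l. C * m + D) {..<N}"
    by (rule L2_set_triangle_ineq)
  also have "\<dots> = A * L2_set c {..<N} + sqrt (real N) * \<bar>C * m + D\<bar>"
    using assms by (simp add: L2_set_right_distrib L2_set_constant)
  also have "\<dots> \<le> A * L2_set c {..<N} + C * (sqrt (real N) * \<bar>m\<bar>) + sqrt (real N) * \<bar>D\<bar>"
  proof -
    have "\<bar>C * m + D\<bar> \<le> C * \<bar>m\<bar> + \<bar>D\<bar>"
      using assms abs_triangle_ineq[of "C * m" D] by (simp add: abs_mult)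
    then have "sqrt (real N) * \<bar>C * m + D\<bar> \<le> sqrt (real N) * (C * \<bar>m\<bar> + \<bar>D\<bar>)"
      by (rule mult_left_mono) simp
    then show ?thesis by (simp add: algebra_simps)
  qed
  also have "\<dots> \<le> A * L2_set c {..<N} + C * L2_set c {..<N} + sqrt (real N) * \<bar>D\<bar>"
    using mult_left_mono[OF sqrt_card_mult_abs_mean_le_L2_set[of "{..<N}" c] assms(2)]
    by (simp add: m_def)
  finally show ?thesis by (simp add: m_def add.assoc algebra_simps)
qed

lemma square_le_of_self_consistent_bound:
  fixes X Y Z k c :: real
  assumes "0 \<le> X" "0 \<le> Y" "0 \<le> Z" "0 \<le> k" "k \<le> 1 / 9" "0 \<le> c"
    and self_consistent: "X \<le> k / 2 * (X + Y) + c / 2 * Z"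
  shows "X\<^sup>2 \<le> 16 / 5 * (k\<^sup>2 * Y\<^sup>2 / 2 + c\<^sup>2 * Z\<^sup>2 / 3)"
proof -
  have "17 / 9 * X \<le> (2 - k) * X"
    using assms by (intro mult_right_mono) auto
  also have "\<dots> \<le> k * Y + c * Z"
    using self_consistent by (simp add: field_simps)
  finally have "X \<le> 9 / 17 * (k * Y + c * Z)" by simp
  then have "X\<^sup>2 \<le> (9 / 17 * (k * Y + c * Z))\<^sup>2"
    using assms by (intro power_mono) auto
  also have "\<dots> \<le> 81 / 289 * (2 * (k\<^sup>2 * Y\<^sup>2) + 2 * (c\<^sup>2 * Z\<^sup>2))"
    using sum_squares_bound[of "k * Y" "c * Z"]
    by (simp add: power2_eq_square algebra_simps)
  also have "\<dots> \<le> 16 / 5 * (k\<^sup>2 * Y\<^sup>2 / 2 + c\<^sup>2 * Z\<^sup>2 / 3)"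
    by (simp add: add_mono)
  finally show ?thesis .
qed

lemma sum_square_le_of_mean_field_recursion:
  fixes a b :: "nat \<Rightarrow> real" and A C D h :: real
  assumes a_nn: "\<And>l. l < N \<Longrightarrow> 0 \<le> a l"
    and A: "0 \<le> A" and C: "0 \<le> C" and AC: "0 < A + C" and step: "(A + C) * h\<^sup>2 \<le> 1 / 9"
    and recursion: "\<And>l. l < N \<Longrightarrow>
          a l \<le> h\<^sup>2 / 2 * (A * (a l + b l) + C * ((\<Sum>j<N. a j + b j) / real N) + D)"
  shows "(\<Sum>l<N. (a l)\<^sup>2)
           \<le> 16 / 5 * ((A + C) * h\<^sup>2)\<^sup>2 * (\<Sum>l<N. (b l)\<^sup>2 / 2 + 1 / 3 * inverse ((A + C)\<^sup>2) * D\<^sup>2)"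
proof -
  define X where "X = L2_set a {..<N}"
  define Y where "Y = L2_set b {..<N}"
  define Z where "Z = sqrt (real N) * \<bar>D\<bar>"
  have "X \<le> L2_set (\<lambda>l. h\<^sup>2 / 2 * (A * (a l + b l) + C * ((\<Sum>j<N. a j + b j) / real N) + D)) {..<N}"
    unfolding X_def by (rule L2_set_mono) (use a_nn recursion in auto)
  also have "\<dots> = h\<^sup>2 / 2 *
      L2_set (\<lambda>l. A * (a l + b l) + C * ((\<Sum>j<N. a j + b j) / real N) + D) {..<N}"
    by (rule L2_set_right_distrib[symmetric]) simp
  also have "\<dots> \<le> h\<^sup>2 / 2 * ((A + C) * L2_set (\<lambda>l. a l + b l) {..<N} + Z)"
    unfolding Z_def using L2_set_mean_field_le[OF A C] by (intro mult_left_mono) auto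
  also have "\<dots> \<le> h\<^sup>2 / 2 * ((A + C) * (X + Y) + Z)"
    unfolding X_def Y_def using AC
    by (intro mult_left_mono add_mono order_refl L2_set_triangle_ineq) auto
  finally have "X \<le> (A + C) * h\<^sup>2 / 2 * (X + Y) + h\<^sup>2 / 2 * Z"
    by (simp add: field_simps)
  then have "X\<^sup>2 \<le> 16 / 5 * (((A + C) * h\<^sup>2)\<^sup>2 * Y\<^sup>2 / 2 + (h\<^sup>2)\<^sup>2 * Z\<^sup>2 / 3)"
    using AC step by (intro square_le_of_self_consistent_bound) (auto simp: X_def Y_def Z_def)
  also have "\<dots> = 16 / 5 * ((A + C) * h\<^sup>2)\<^sup>2 *
      (\<Sum>l<N. (b l)\<^sup>2 / 2 + 1 / 3 * inverse ((A + C)\<^sup>2) * D\<^sup>2)"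
  proof -
    have "Y\<^sup>2 = (\<Sum>l<N. (b l)\<^sup>2)" "Z\<^sup>2 = real N * D\<^sup>2"
      by (simp_all add: Y_def Z_def L2_set_def sum_nonneg power_mult_distrib)
    moreover have "(h\<^sup>2)\<^sup>2 = ((A + C) * h\<^sup>2)\<^sup>2 * inverse ((A + C)\<^sup>2)"
      using AC by (simp add: power_mult_distrib)
    ultimately show ?thesis
      by (simp add: sum.distrib sum_divide_distrib[symmetric] algebra_simps)
  qed
  finally show ?thesis
    by (simp add: X_def L2_set_def sum_nonneg)
qed

lemma has_derivative_fun_upd_comp:
  fixes f :: "'a::real_inner \<Rightarrow> real"
  assumes f: "\<And>z. (f has_derivative (\<lambda>k. g z \<bullet> k)) (at z)"
  shows "((\<lambda>u. f ((y(i := u)) j)) has_derivative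
           (\<lambda>k. g (y j) \<bullet> (if j = i then k else 0))) (at (y i))"
proof -
  have "((f \<circ> (\<lambda>u. (y(i := u)) j)) has_derivative
      ((\<lambda>k. g (y j) \<bullet> k) \<circ> (\<lambda>k. if j = i then k else 0))) (at (y i))"
    by (rule diff_chain_at[OF has_derivative_fun_upd_component]) (simp add: f)
  then show ?thesis by (simp add: o_def)
qed

lemma has_derivative_fun_upd_comp2:
  fixes f :: "'a::real_inner \<Rightarrow> 'a \<Rightarrow> real"
  assumes f: "\<And>z w. (case_prod f has_derivative (\<lambda>(k1, k2). g z w \<bullet> k1 + g w z \<bullet> k2)) (at (z, w))"
  shows "((\<lambda>u. f ((y(i := u)) j) ((y(i := u)) l)) has_derivative
           (\<lambda>k. g (y j) (y l) \<bullet> (if j = i then k else 0) + g (y l) (y j) \<bullet> (if l = i then k else 0)))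
           (at (y i))"
proof -
  have "((case_prod f \<circ> (\<lambda>u. ((y(i := u)) j, (y(i := u)) l))) has_derivative
      ((\<lambda>(k1, k2). g (y j) (y l) \<bullet> k1 + g (y l) (y j) \<bullet> k2) \<circ>
       (\<lambda>k. (if j = i then k else 0, if l = i then k else 0)))) (at (y i))"
    by (rule diff_chain_at[OF has_derivative_Pair[OF has_derivative_fun_upd_component
          has_derivative_fun_upd_component]]) (simp add: f)
  then show ?thesis by (simp add: o_def)
qed

lemma has_derivative_potU_update:
  fixes V :: "'a::real_inner \<Rightarrow> real"
  assumes V_deriv: "\<And>y. (V has_derivative (\<lambda>k. gradV y \<bullet> k)) (at y)"
    and W_C1: "\<And>y z. (case_prod W has_derivative
                 (\<lambda>(k1, k2). grad1W y z \<bullet> k1 + grad1W z y \<bullet> k2)) (at (y, z))"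
    and i: "i < N"
  shows "((\<lambda>u. potU N \<epsilon> V W (y(i := u))) has_derivative
           (\<lambda>k. (gradV (y i) + (\<epsilon> / real N) *\<^sub>R (\<Sum>j<N. grad1W (y i) (y j))) \<bullet> k)) (at (y i))"
proof -
  define \<delta> where "\<delta> j k = (if j = i then k else 0)" for j and k :: 'a
  have V_term: "((\<lambda>u. V ((y(i := u)) j)) has_derivative (\<lambda>k. gradV (y j) \<bullet> \<delta> j k)) (at (y i))" for j
    unfolding \<delta>_def by (rule has_derivative_fun_upd_comp[OF V_deriv])
  have W_term: "((\<lambda>u. W ((y(i := u)) j) ((y(i := u)) l)) has_derivative
      (\<lambda>k. grad1W (y j) (y l) \<bullet> \<delta> j k + grad1W (y l) (y j) \<bullet> \<delta> l k)) (at (y i))" for j l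
    unfolding \<delta>_def by (rule has_derivative_fun_upd_comp2[OF W_C1])
  have "((\<lambda>u. potU N \<epsilon> V W (y(i := u))) has_derivative (\<lambda>k. \<Sum>j<N. gradV (y j) \<bullet> \<delta> j k
      + \<epsilon> / (2 * real N) * (\<Sum>l<N. grad1W (y j) (y l) \<bullet> \<delta> j k + grad1W (y l) (y j) \<bullet> \<delta> l k)))
      (at (y i))"
    unfolding potU_def by (intro has_derivative_sum has_derivative_add has_derivative_mult_right V_term W_term)
  moreover have "(\<Sum>j<N. gradV (y j) \<bullet> \<delta> j k
      + \<epsilon> / (2 * real N) * (\<Sum>l<N. grad1W (y j) (y l) \<bullet> \<delta> j k + grad1W (y l) (y j) \<bullet> \<delta> l k))
      = (gradV (y i) + (\<epsilon> / real N) *\<^sub>R (\<Sum>j<N. grad1W (y i) (y j))) \<bullet> k" for k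
  proof -
    have V_sum: "(\<Sum>j<N. gradV (y j) \<bullet> \<delta> j k) = gradV (y i) \<bullet> k"
      using i by (simp add: \<delta>_def if_distrib cong: if_cong)
    have W_sum1: "(\<Sum>j<N. \<Sum>l<N. grad1W (y j) (y l) \<bullet> \<delta> j k) = (\<Sum>l<N. grad1W (y i) (y l) \<bullet> k)"
      using i by (subst sum.swap) (simp add: \<delta>_def if_distrib cong: if_cong)
    have W_sum2: "(\<Sum>j<N. \<Sum>l<N. grad1W (y l) (y j) \<bullet> \<delta> l k) = (\<Sum>l<N. grad1W (y i) (y l) \<bullet> k)"
      using i by (simp add: \<delta>_def if_distrib cong: if_cong)
    have "(\<Sum>j<N. gradV (y j) \<bullet> \<delta> j k
        + \<epsilon> / (2 * real N) * (\<Sum>l<N. grad1W (y j) (y l) \<bullet> \<delta> j k + grad1W (y l) (y j) \<bullet> \<delta> l k))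
      = (\<Sum>j<N. gradV (y j) \<bullet> \<delta> j k) + \<epsilon> / (2 * real N) *
          ((\<Sum>j<N. \<Sum>l<N. grad1W (y j) (y l) \<bullet> \<delta> j k) + (\<Sum>j<N. \<Sum>l<N. grad1W (y l) (y j) \<bullet> \<delta> l k))"
      by (simp add: sum.distrib sum_distrib_left[symmetric] sum_divide_distrib[symmetric])
    also have "\<dots> = gradV (y i) \<bullet> k + \<epsilon> / real N * (\<Sum>l<N. grad1W (y i) (y l) \<bullet> k)"
      by (simp add: V_sum W_sum1 W_sum2)
    finally show ?thesis
      by (simp add: inner_add_left inner_sum_left)
  qed
  ultimately show ?thesis by simp
qed

locale mean_field_potential =
  fixes N :: nat and \<epsilon> L Lt :: real
    and V :: "'a::real_inner \<Rightarrow> real" and gradV :: "'a \<Rightarrow> 'a"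
    and W :: "'a \<Rightarrow> 'a \<Rightarrow> real" and grad1W :: "'a \<Rightarrow> 'a \<Rightarrow> 'a"
    and gradU :: "(nat \<Rightarrow> 'a) \<Rightarrow> nat \<Rightarrow> 'a"
  assumes eps: "\<epsilon> \<ge> 0" and L: "L > 0" and Lt: "Lt \<ge> 0"
    and V_deriv: "\<And>y. (V has_derivative (\<lambda>k. gradV y \<bullet> k)) (at y)"
    and V0: "V 0 = 0" and Vnn: "\<And>y. V y \<ge> 0"
    and gradV_Lip: "\<And>y z. norm (gradV y - gradV z) \<le> L * norm (y - z)"
    and W_C1: "\<And>y z. (case_prod W has_derivative
                 (\<lambda>(k1, k2). grad1W y z \<bullet> k1 + grad1W z y \<bullet> k2)) (at (y, z))"
    and gradW_Lip: "\<And>y z y' z'. norm (grad1W y z - grad1W y' z') \<le> Lt * (norm (y - y') + norm (z - z'))"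
    and gradU_def: "\<And>y i. i < N \<Longrightarrow>
          ((\<lambda>u. potU N \<epsilon> V W (y(i := u))) has_derivative (\<lambda>k. gradU y i \<bullet> k)) (at (y i))"
begin

lemma gradU_eq:
  assumes "i < N"
  shows "gradU y i = gradV (y i) + (\<epsilon> / real N) *\<^sub>R (\<Sum>j<N. grad1W (y i) (y j))"
  by (rule gradient_unique[OF gradU_def[OF assms] has_derivative_potU_update[OF V_deriv W_C1 assms]])

lemma gradV_0: "gradV 0 = 0"
  by (rule gradient_eq_0_at_global_min[OF V_deriv]) (simp add: V0 Vnn)

lemma norm_gradU_le:
  assumes i: "i < N"
  shows "norm (gradU y i) \<le> (L + \<epsilon> * Lt) * norm (y i) + \<epsilon> * Lt / real N * (\<Sum>j<N. norm (y j))
           + \<epsilon> * norm (grad1W 0 0)"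
proof -
  have N: "real N > 0" using i by simp
  have gradV_le: "norm (gradV (y i)) \<le> L * norm (y i)"
    using gradV_Lip[of "y i" 0] gradV_0 by simp
  have grad1W_le: "norm (grad1W (y i) (y j)) \<le> norm (grad1W 0 0) + Lt * norm (y i) + Lt * norm (y j)" for j
    using gradW_Lip[of "y i" "y j" 0 0] norm_triangle_ineq[of "grad1W (y i) (y j) - grad1W 0 0" "grad1W 0 0"]
    by (simp add: algebra_simps)
  have "norm (\<Sum>j<N. grad1W (y i) (y j)) \<le> (\<Sum>j<N. norm (grad1W 0 0) + Lt * norm (y i) + Lt * norm (y j))"
    by (rule order_trans[OF norm_sum sum_mono]) (rule grad1W_le)
  also have "\<dots> = real N * (norm (grad1W 0 0) + Lt * norm (y i)) + Lt * (\<Sum>j<N. norm (y j))"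
    by (simp add: sum.distrib sum_distrib_left algebra_simps)
  finally have interaction_le: "norm (\<Sum>j<N. grad1W (y i) (y j))
      \<le> real N * (norm (grad1W 0 0) + Lt * norm (y i)) + Lt * (\<Sum>j<N. norm (y j))" .
  have "norm (gradU y i) \<le> norm (gradV (y i)) + \<epsilon> / real N * norm (\<Sum>j<N. grad1W (y i) (y j))"
    using gradU_eq[OF i, of y] eps
      norm_triangle_ineq[of "gradV (y i)" "(\<epsilon> / real N) *\<^sub>R (\<Sum>j<N. grad1W (y i) (y j))"]
    by simp
  also have "\<dots> \<le> L * norm (y i) + \<epsilon> / real N *
      (real N * (norm (grad1W 0 0) + Lt * norm (y i)) + Lt * (\<Sum>j<N. norm (y j)))"
    using eps by (intro add_mono gradV_le mult_left_mono interaction_le) auto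
  also have "\<dots> = (L + \<epsilon> * Lt) * norm (y i) + \<epsilon> * Lt / real N * (\<Sum>j<N. norm (y j))
      + \<epsilon> * norm (grad1W 0 0)"
    using N by (simp add: field_simps)
  finally show ?thesis .
qed

end

locale mean_field_flow = mean_field_potential +
  fixes h :: real and x v :: "nat \<Rightarrow> 'a::real_inner" and q p :: "real \<Rightarrow> nat \<Rightarrow> 'a"
  assumes h: "h > 0"
    and q0: "\<And>i. i < N \<Longrightarrow> q 0 i = x i" and p0: "\<And>i. i < N \<Longrightarrow> p 0 i = v i"
    and q_ode: "\<And>t i. i < N \<Longrightarrow> ((\<lambda>s. q s i) has_vector_derivative p t i) (at t)"
    and p_ode: "\<And>t i. i < N \<Longrightarrow> ((\<lambda>s. p s i) has_vector_derivative - gradU (q t) i) (at t)"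
begin

definition displacement :: "nat \<Rightarrow> real" where
  "displacement l = sqrt (SUP s\<in>{0..h}. (norm (q s l - x l - s *\<^sub>R v l))\<^sup>2)"

lemma norm_le_displacement:
  assumes l: "l < N" and s: "s \<in> {0..h}"
  shows "norm (q s l - x l - s *\<^sub>R v l) \<le> displacement l"
proof -
  have "continuous_on {0..h} (\<lambda>s. q s l - x l - s *\<^sub>R v l)"
    using q_ode[OF l] has_vector_derivative_continuous
    by (intro continuous_intros continuous_at_imp_continuous_on) blast
  then show ?thesis
    unfolding displacement_def using s by (rule norm_le_sqrt_SUP_square_norm)
qed

lemma displacement_nonneg:
  assumes "l < N"
  shows "0 \<le> displacement l"
  using order_trans[OF norm_ge_zero norm_le_displacement[OF assms, of 0]] h by simp

lemma norm_q_le: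
  assumes l: "l < N" and s: "s \<in> {0..h}"
  shows "norm (q s l) \<le> displacement l + (norm (x l) + h * norm (v l))"
proof -
  have "norm (q s l) \<le> norm (q s l - x l - s *\<^sub>R v l) + norm (x l) + norm (s *\<^sub>R v l)"
    using norm_triangle_ineq[of "q s l - x l - s *\<^sub>R v l" "x l + s *\<^sub>R v l"]
      norm_triangle_ineq[of "x l" "s *\<^sub>R v l"] by simp
  moreover have "norm (s *\<^sub>R v l) \<le> h * norm (v l)"
    using s by (simp add: mult_right_mono)
  ultimately show ?thesis using norm_le_displacement[OF l s] by simp
qed

lemma displacement_recursion:
  assumes l: "l < N"
  shows "displacement l \<le> h\<^sup>2 / 2 *
    ((L + \<epsilon> * Lt) * (displacement l + (norm (x l) + h * norm (v l)))
     + \<epsilon> * Lt * ((\<Sum>j<N. displacement j + (norm (x j) + h * norm (v j))) / real N)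
     + \<epsilon> * norm (grad1W 0 0))"
    (is "_ \<le> h\<^sup>2 / 2 * ?F")
proof -
  have force_le: "norm (- gradU (q s) l) \<le> ?F" if s: "s \<in> {0..h}" for s
  proof -
    have "norm (gradU (q s) l) \<le> (L + \<epsilon> * Lt) * norm (q s l)
        + \<epsilon> * Lt / real N * (\<Sum>j<N. norm (q s j)) + \<epsilon> * norm (grad1W 0 0)"
      by (rule norm_gradU_le[OF l])
    also have "\<dots> \<le> (L + \<epsilon> * Lt) * (displacement l + (norm (x l) + h * norm (v l)))
        + \<epsilon> * Lt / real N * (\<Sum>j<N. displacement j + (norm (x j) + h * norm (v j)))
        + \<epsilon> * norm (grad1W 0 0)"
      using L Lt eps l s by (intro add_mono mult_left_mono norm_q_le sum_mono order_refl) auto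
    finally show ?thesis by simp
  qed
  have "sqrt (SUP s\<in>{0..h}. (norm (q s l - q 0 l - s *\<^sub>R p 0 l))\<^sup>2) \<le> ?F * h\<^sup>2 / 2"
    using h force_le
    by (intro sqrt_SUP_second_order_remainder_le[where F = "\<lambda>s. - gradU (q s) l"] q_ode p_ode l) auto
  then show ?thesis by (simp add: displacement_def q0 p0 l mult.commute)
qed

end

theorem mainTheorem12:
  fixes N :: nat and \<epsilon> L Lt h :: real
    and V :: "'a::euclidean_space \<Rightarrow> real" and gradV :: "'a \<Rightarrow> 'a"
    and W :: "'a \<Rightarrow> 'a \<Rightarrow> real" and grad1W :: "'a \<Rightarrow> 'a \<Rightarrow> 'a"
    and gradU :: "(nat \<Rightarrow> 'a) \<Rightarrow> nat \<Rightarrow> 'a"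
    and x v :: "nat \<Rightarrow> 'a" and q p :: "real \<Rightarrow> nat \<Rightarrow> 'a"
  assumes eps: "\<epsilon> \<ge> 0" and L: "L > 0" and Lt: "Lt \<ge> 0"
    and V_deriv: "\<And>y. (V has_derivative (\<lambda>k. gradV y \<bullet> k)) (at y)"
    and gradV_cont: "continuous_on UNIV gradV"
    and V0: "V 0 = 0" and Vnn: "\<And>y. V y \<ge> 0"
    and gradV_Lip: "\<And>y z. norm (gradV y - gradV z) \<le> L * norm (y - z)"
    and W_C1: "\<And>y z. (case_prod W has_derivative (\<lambda>(k1, k2). grad1W y z \<bullet> k1 + grad1W z y \<bullet> k2)) (at (y, z))"
    and W_deriv1: "\<And>y z. ((\<lambda>u. W u z) has_derivative (\<lambda>k. grad1W y z \<bullet> k)) (at y)"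
    and W_sym: "\<And>y z. W y z = W z y"
    and gradW_Lip: "\<And>y z y' z'. norm (grad1W y z - grad1W y' z') \<le> Lt * (norm (y - y') + norm (z - z'))"
    and gradU_def: "\<And>y i. i < N \<Longrightarrow>
          ((\<lambda>u. potU N \<epsilon> V W (y(i := u))) has_derivative (\<lambda>k. gradU y i \<bullet> k)) (at (y i))"
    and q0: "\<And>i. i < N \<Longrightarrow> q 0 i = x i" and p0: "\<And>i. i < N \<Longrightarrow> p 0 i = v i"
    and q_ode: "\<And>t i. i < N \<Longrightarrow> ((\<lambda>s. q s i) has_vector_derivative p t i) (at t)"
    and p_ode: "\<And>t i. i < N \<Longrightarrow> ((\<lambda>s. p s i) has_vector_derivative - gradU (q t) i) (at t)"
    and h: "h > 0" and step: "(L + 2 * \<epsilon> * Lt) * h\<^sup>2 \<le> 1 / 9"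
  shows "(\<Sum>l<N. (SUP s\<in>{0..h}. (norm (q s l - x l - s *\<^sub>R v l))\<^sup>2))
     \<le> 16 / 5 * ((L + 2 * \<epsilon> * Lt) * h\<^sup>2)\<^sup>2 *
        (\<Sum>l<N. (norm (x l))\<^sup>2 + h\<^sup>2 * (norm (v l))\<^sup>2
            + 1 / 3 * inverse ((L + 2 * \<epsilon> * Lt)\<^sup>2) * \<epsilon>\<^sup>2 * (norm (grad1W 0 0))\<^sup>2)"
proof -
  \<comment> \<open>W_C1 already provides the joint derivative of W.\<close>
  interpret mean_field_flow N \<epsilon> L Lt V gradV W grad1W gradU h x v q p
    by (unfold_locales; fact assms)
  define b where "b l = norm (x l) + h * norm (v l)" for l
  have "(\<Sum>l<N. (SUP s\<in>{0..h}. (norm (q s l - x l - s *\<^sub>R v l))\<^sup>2)) = (\<Sum>l<N. (displacement l)\<^sup>2)"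
    using displacement_nonneg by (intro sum.cong) (simp_all add: displacement_def)
  also have "\<dots> \<le> 16 / 5 * ((L + \<epsilon> * Lt + \<epsilon> * Lt) * h\<^sup>2)\<^sup>2 *
      (\<Sum>l<N. (b l)\<^sup>2 / 2 + 1 / 3 * inverse ((L + \<epsilon> * Lt + \<epsilon> * Lt)\<^sup>2) * (\<epsilon> * norm (grad1W 0 0))\<^sup>2)"
    using L eps Lt h step displacement_recursion unfolding b_def
    by (intro sum_square_le_of_mean_field_recursion displacement_nonneg)
      (auto simp: algebra_simps add_pos_nonneg)
  also have "\<dots> \<le> 16 / 5 * ((L + 2 * \<epsilon> * Lt) * h\<^sup>2)\<^sup>2 *
      (\<Sum>l<N. (norm (x l))\<^sup>2 + h\<^sup>2 * (norm (v l))\<^sup>2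
          + 1 / 3 * inverse ((L + 2 * \<epsilon> * Lt)\<^sup>2) * \<epsilon>\<^sup>2 * (norm (grad1W 0 0))\<^sup>2)"
  proof -
    have b_le: "(b l)\<^sup>2 / 2 \<le> (norm (x l))\<^sup>2 + h\<^sup>2 * (norm (v l))\<^sup>2" for l
      using sum_squares_bound[of "norm (x l)" "h * norm (v l)"]
      by (simp add: b_def power2_sum power_mult_distrib)
    have "L + \<epsilon> * Lt + \<epsilon> * Lt = L + 2 * \<epsilon> * Lt" by simp
    then show ?thesis
      by (simp only:) (intro mult_left_mono sum_mono add_mono b_le; simp add: power_mult_distrib)
  qed
  finally show ?thesis .
qed

end
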